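(* Let $S,T\subseteq\mathbb{Z}_{>0}$ be finite with $T\preceq S$. Then $T\triangleleft S\preceq S$.
   Context: For a finite set $S\subseteq\mathbb{Z}_{>0}$, $S(i)$ denotes its $i$th smallest element. $T\preceq S$ means $|T|\ge|S|$ and $T(i)<S(i)$ for all $i\in[|S|]$. For finite $S,T$, $T\triangleleft S$ is computed by going through $S$ from largest to smallest; each $s$ picks the largest element of $T$ less than $s$ not yet picked (if one exists); $T\triangleleft S$ is the set of picked elements. *)

theory Defs
  imports Main
begin

definition ith :: "nat set \<Rightarrow> nat \<Rightarrow> nat" where
  "ith S i = sorted_list_of_set S ! (i - 1)"

definition dominated :: "nat set \<Rightarrow> nat set \<Rightarrow> bool" where
  "dominated T S \<longleftrightarrow> card T \<ge> card S \<and> (\<forall>i\<in>{1..card S}. ith T i < ith S i)"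

fun greedy_pick :: "nat set \<Rightarrow> nat list \<Rightarrow> nat set" where
  "greedy_pick avail [] = {}"
| "greedy_pick avail (s # ss) =
     (if \<exists>t\<in>avail. t < s
      then (let t = Max {t\<in>avail. t < s} in insert t (greedy_pick (avail - {t}) ss))
      else greedy_pick avail ss)"

definition tri :: "nat set \<Rightarrow> nat set \<Rightarrow> nat set" where
  "tri T S = greedy_pick T (rev (sorted_list_of_set S))"

end

theory Submission
  imports Defs
begin

text \<open>
  Domination is a counting condition: for finite sets, T \<preceq> S holds iff every x
  has at least as many elements of T below x as elements of S at or below x.
  The greedy procedure preserves this condition: when the largest element s picks
  the largest available t < s, removing s from S and t from T keeps the
  counts balanced, since no element of T lies strictly between t and s.
  Hence the picked set again dominates S.
\<close>

lemma card_less_sorted_list_of_set_nth: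
  fixes A :: "'a::linorder set"
  assumes "finite A" "j < card A"
  shows "card {a \<in> A. a < sorted_list_of_set A ! j} = j"
proof -
  define L where "L = sorted_list_of_set A"
  have L_split: "L = take j L @ L ! j # drop (Suc j) L"
    using assms(2) by (simp add: L_def id_take_nth_drop)
  have "sorted_wrt (<) L" by (simp add: L_def)
  then have "sorted_wrt (<) (take j L @ L ! j # drop (Suc j) L)" using L_split by simp
  moreover have "A = set (take j L @ L ! j # drop (Suc j) L)"
    using assms(1) L_split by (simp add: L_def)
  ultimately have "{a \<in> A. a < L ! j} = set (take j L)"
    by (auto simp: sorted_wrt_append)
  then show ?thesis
    using assms(2) by (simp add: L_def distinct_card)
qed

lemma card_less_ith:
  assumes "finite A" "1 \<le> i" "i \<le> card A"
  shows "card {a \<in> A. a < ith A i} = i - 1"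
  using assms card_less_sorted_list_of_set_nth[of A "i - 1"] by (simp add: ith_def)

lemma ith_in:
  assumes "finite A" "1 \<le> i" "i \<le> card A"
  shows "ith A i \<in> A"
  using assms nth_mem[of "i - 1" "sorted_list_of_set A"] by (simp add: ith_def)

lemma card_atMost_ith:
  assumes "finite A" "1 \<le> i" "i \<le> card A"
  shows "card {a \<in> A. a \<le> ith A i} = i"
proof -
  have "{a \<in> A. a \<le> ith A i} = insert (ith A i) {a \<in> A. a < ith A i}"
    using ith_in[OF assms] by auto
  then show ?thesis using assms card_less_ith[OF assms] by simp
qed

lemma dominated_imp_count:
  assumes "finite S" "finite T" "dominated T S"
  shows "card {s \<in> S. s \<le> x} \<le> card {t \<in> T. t < x}"
proof (cases "card {s \<in> S. s \<le> x} = 0")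
  case True
  then show ?thesis by linarith
next
  case False
  define k where "k = card {s \<in> S. s \<le> x}"
  have "k \<noteq> 0" "k \<le> card S"
    using False assms(1) unfolding k_def by (auto intro: card_mono)
  then have k: "1 \<le> k" "k \<le> card S" "k \<le> card T"
    using assms(3) unfolding dominated_def by auto
  have "ith S k \<le> x"
  proof (rule ccontr)
    assume "\<not> ith S k \<le> x"
    then have "k \<le> card {s \<in> S. s < ith S k}"
      unfolding k_def using assms(1) by (intro card_mono) auto
    then show False using card_less_ith[OF assms(1) k(1,2)] k(1) by simp
  qed
  moreover have "ith T k < ith S k" using assms(3) k unfolding dominated_def by auto
  ultimately have "{t \<in> T. t \<le> ith T k} \<subseteq> {t \<in> T. t < x}" by auto
  then have "card {t \<in> T. t \<le> ith T k} \<le> card {t \<in> T. t < x}"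
    using assms(2) by (intro card_mono) auto
  then show ?thesis using card_atMost_ith[OF assms(2) k(1,3)] unfolding k_def by simp
qed

lemma count_imp_dominated:
  assumes "finite S" "finite T"
    and count: "\<forall>x. card {s \<in> S. s \<le> x} \<le> card {t \<in> T. t < x}"
  shows "dominated T S"
proof -
  have card_le: "card S \<le> card T"
  proof (cases "S = {}")
    case False
    then have "{s \<in> S. s \<le> Max S} = S" using assms(1) by auto
    then have "card S \<le> card {t \<in> T. t < Max S}" using count by metis
    also have "\<dots> \<le> card T" using assms(2) by (intro card_mono) auto
    finally show ?thesis .
  qed simp
  have "ith T i < ith S i" if i: "1 \<le> i" "i \<le> card S" for i
  proof (rule ccontr)
    assume "\<not> ith T i < ith S i"
    then have "card {t \<in> T. t < ith S i} \<le> card {t \<in> T. t < ith T i}"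
      using assms(2) by (intro card_mono) auto
    also have "\<dots> = i - 1" using card_less_ith[OF assms(2) i(1)] i(2) card_le by simp
    moreover have "i \<le> card {t \<in> T. t < ith S i}"
      using count card_atMost_ith[OF assms(1) i] by metis
    ultimately show False using i(1) by linarith
  qed
  then show ?thesis using card_le unfolding dominated_def by auto
qed

lemma card_filter_insert:
  assumes "finite B" "b \<notin> B"
  shows "card {a \<in> insert b B. P a} = card {a \<in> B. P a} + (if P b then 1 else 0)"
proof -
  have "{a \<in> insert b B. P a} = (if P b then insert b {a \<in> B. P a} else {a \<in> B. P a})"
    by auto
  then show ?thesis using assms by simp
qed

lemma card_filter_Diff_singleton:
  assumes "finite A" "t \<in> A"
  shows "card {a \<in> A - {t}. P a} = card {a \<in> A. P a} - (if P t then 1 else 0)"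
proof -
  have "{a \<in> A - {t}. P a} = {a \<in> A. P a} - {t}" by blast
  then show ?thesis using assms by auto
qed

lemma greedy_pick_subset: "greedy_pick A ss \<subseteq> A"
proof (induction ss arbitrary: A)
  case Nil
  then show ?case by simp
next
  case (Cons s ss)
  have "Max {t \<in> A. t < s} \<in> A" if "\<exists>t\<in>A. t < s"
    using that Max_in[of "{t \<in> A. t < s}"] by auto
  then show ?case using Cons.IH by (auto simp: Let_def)
qed

lemma count_remove_Max_below:
  fixes A B :: "nat set"
  assumes "finite A" "finite B" and below_s: "\<forall>b\<in>B. b < s"
    and t_in: "t \<in> A" and t_less: "t < s" and t_max: "\<forall>a\<in>A. a < s \<longrightarrow> a \<le> t"
    and count: "\<forall>x. card {b \<in> insert s B. b \<le> x} \<le> card {a \<in> A. a < x}"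
  shows "card {b \<in> B. b \<le> x} \<le> card {a \<in> A - {t}. a < x}"
proof -
  have s_notin: "s \<notin> B" using below_s by blast
  have count_sB: "card {b \<in> insert s B. b \<le> y} = card {b \<in> B. b \<le> y} + (if s \<le> y then 1 else 0)" for y
    using card_filter_insert[OF assms(2) s_notin] .
  have count_At: "card {a \<in> A - {t}. a < y} = card {a \<in> A. a < y} - (if t < y then 1 else 0)" for y
    using card_filter_Diff_singleton[OF assms(1) t_in] .
  consider "x \<le> t" | "t < x" "x \<le> s" | "s < x" by linarith
  then show ?thesis
  proof cases
    case 1
    then show ?thesis using count[rule_format, of x] count_sB[of x] count_At[of x] by auto
  next
    case 2
    \<comment> \<open>no element of A lies in [x, s), so comparing counts at s, where s itself is counted, suffices\<close>
    have "{a \<in> A. a < x} = {a \<in> A. a < s}" using 2 t_max by fastforce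
    moreover have "card {b \<in> B. b \<le> x} \<le> card {b \<in> B. b \<le> s}"
      using 2 assms(2) by (intro card_mono) auto
    ultimately show ?thesis using count[rule_format, of s] count_sB[of s] count_At[of x] 2 by auto
  next
    case 3
    then show ?thesis using count[rule_format, of x] count_sB[of x] count_At[of x] t_less by auto
  qed
qed

lemma greedy_pick_count:
  fixes A :: "nat set"
  assumes "finite A" "sorted_wrt (>) ss"
    and "\<forall>x. card {s \<in> set ss. s \<le> x} \<le> card {a \<in> A. a < x}"
  shows "card {s \<in> set ss. s \<le> x} \<le> card {p \<in> greedy_pick A ss. p < x}"
  using assms
proof (induction ss arbitrary: A x)
  case Nil
  then show ?case by simp
next
  case (Cons s ss)
  have below_s: "\<forall>b\<in>set ss. b < s" using Cons.prems(2) by simp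
  then have "card {b \<in> set (s # ss). b \<le> s} \<ge> 1"
    using card_filter_insert[of "set ss" s "\<lambda>b. b \<le> s"] by auto
  then have "card {a \<in> A. a < s} \<ge> 1" using Cons.prems(3) order_trans by blast
  then have ex: "\<exists>a\<in>A. a < s" by (metis (lifting) Collect_empty_eq card.empty not_one_le_zero)
  define t where "t = Max {a \<in> A. a < s}"
  have "t \<in> {a \<in> A. a < s}" unfolding t_def using ex by (intro Max_in) auto
  then have t: "t \<in> A" "t < s" by auto
  have t_max: "\<forall>a\<in>A. a < s \<longrightarrow> a \<le> t" unfolding t_def by simp
  define P where "P = greedy_pick (A - {t}) ss"
  have pick: "greedy_pick A (s # ss) = insert t P" using ex unfolding P_def t_def by (simp add: Let_def)
  have "P \<subseteq> A - {t}" unfolding P_def by (rule greedy_pick_subset)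
  then have "finite P" "t \<notin> P" using Cons.prems(1) finite_subset by auto
  have "s \<notin> set ss" using below_s by blast
  then have "card {b \<in> set (s # ss). b \<le> x} = card {b \<in> set ss. b \<le> x} + (if s \<le> x then 1 else 0)"
    unfolding list.set(2) by (rule card_filter_insert[OF finite_set])
  also have "\<dots> \<le> card {p \<in> P. p < x} + (if t < x then 1 else 0)"
  proof -
    have "card {b \<in> set ss. b \<le> x} \<le> card {p \<in> P. p < x}"
      unfolding P_def using Cons.prems count_remove_Max_below[OF _ _ below_s t t_max]
      by (intro Cons.IH) auto
    then show ?thesis using \<open>t < s\<close> by auto
  qed
  also have "\<dots> = card {p \<in> insert t P. p < x}"
    using card_filter_insert[OF \<open>finite P\<close> \<open>t \<notin> P\<close>] by simp
  finally show ?case by (simp only: pick)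
qed

theorem corollary4p8:
  fixes S T :: "nat set"
  assumes "finite S" and "finite T"
    and "\<forall>x\<in>S. 0 < x" and "\<forall>x\<in>T. 0 < x"
    and "dominated T S"
  shows "dominated (tri T S) S"
proof -
  define ss where "ss = rev (sorted_list_of_set S)"
  have ss: "sorted_wrt (>) ss" "set ss = S"
    unfolding ss_def using assms(1) by (simp_all add: sorted_wrt_rev)
  have "finite (tri T S)"
    using assms(2) greedy_pick_subset finite_subset unfolding tri_def by metis
  moreover have "card {s \<in> S. s \<le> x} \<le> card {p \<in> tri T S. p < x}" for x
    using greedy_pick_count[OF assms(2) ss(1)] dominated_imp_count[OF assms(1,2,5)]
    unfolding tri_def ss_def[symmetric] ss(2) by blast
  ultimately show ?thesis using count_imp_dominated[OF assms(1)] by blast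
qed

end
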